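(* Let $n,m\in\mathbb{N}$, $f:\mathbb{F}_2^n\to\mathbb{F}_2$, $S\subseteq\mathbb{F}_2^n$, and let $g:\mathbb{F}_2^n\to\mathbb{F}_2$ be the indicator of $S$ ($g(\mathbf{x})=1$ iff $\mathbf{x}\in S$). Then, when the two-query algorithm $A^{(m)2,3}_n(g,f,f)$ is executed, the probability that the driving qubit is measured as $\ket{1}$ equals $p:=2^{-n}\sum_{\mathbf{x}\in S}|\mathcal{H}^{(m)}_f(\mathbf{x})|^2$.
   Context: $\zeta_m=e^{2\pi i/m}$; $wt$ is Hamming weight; $\mathbf{x}\cdot\mathbf{y}=\bigoplus_i x_iy_i$. The $m$-Hadamard transform is $\mathcal{H}^{(m)}_f(\boldsymbol{\omega})=2^{-n/2}\sum_{\mathbf{x}}(-1)^{f(\mathbf{x})\oplus\mathbf{x}\cdot\boldsymbol{\omega}}\zeta_m^{wt(\mathbf{x})}$. Quantum gates: $\mathrm{H}$ is the Hadamard gate; $\Omega_m=\frac{1}{\sqrt2}\begin{pmatrix}1&\zeta_m\\1&-\zeta_m\end{pmatrix}$; $\mathrm{S}_m=\mathrm{diag}(1,\zeta_m)$; for a Boolean function $f$, $U_f$ denotes the phase oracle $\ket{\mathbf{x}}\mapsto(-1)^{f(\mathbf{x})}\ket{\mathbf{x}}$ on $n$ qubits (realized via an ancilla in state $\ket{-}$). Algorithm $A^{(m)2,3}_n(f_1,f_2,f_3)$: start with a driving qubit in $\ket{+}$ and an $n$-qubit register in $\ket{0^n}$; apply $\mathrm{H}^{\otimes n}$ to the register;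 then, controlled on the driving qubit being $\ket{0}$, apply to the register in order $U_{f_2}$, $\Omega_m^{\otimes n}$, $U_{f_1}$, $\mathrm{H}^{\otimes n}$; controlled on the driving qubit being $\ket{1}$, apply in order $\mathrm{S}_m^{\otimes n}$, $U_{f_3}$; finally apply $\mathrm{H}$ to the driving qubit and measure it in the computational basis. *)

theory Defs
  imports "HOL-Analysis.Analysis"
begin

text \<open>Bit strings in F_2^n are boolean lists of length n; F_2 values are booleans
  (True = 1), addition in F_2 is inequality (xor).\<close>

definition bitstrings :: "nat \<Rightarrow> bool list set" where
  "bitstrings n = {xs. length xs = n}"

definition zeta :: "nat \<Rightarrow> complex" where
  "zeta m = exp (2 * of_real pi * \<i> / of_nat m)"

definition wt :: "bool list \<Rightarrow> nat" where
  "wt x = length (filter id x)"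

definition dotp :: "bool list \<Rightarrow> bool list \<Rightarrow> bool" where
  "dotp x y = odd (card {i. i < length x \<and> i < length y \<and> x ! i \<and> y ! i})"

definition sgnb :: "bool \<Rightarrow> complex" where
  "sgnb b = (if b then -1 else 1)"

definition mHadamard :: "nat \<Rightarrow> nat \<Rightarrow> (bool list \<Rightarrow> bool) \<Rightarrow> bool list \<Rightarrow> complex" where
  "mHadamard n m f w =
     (1 / of_real (sqrt (2 ^ n))) * (\<Sum>x\<in>bitstrings n. sgnb (f x \<noteq> dotp x w) * zeta m ^ wt x)"

text \<open>Single-qubit gates as matrices indexed by (row, column) in bool (False = 0, True = 1).\<close>
type_synonym gate1 = "bool \<Rightarrow> bool \<Rightarrow> complex"

definition hadamard :: gate1 where
  "hadamard y x = sgnb (y \<and> x) / of_real (sqrt 2)"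

definition Omega :: "nat \<Rightarrow> gate1" where
  "Omega m y x = (if x then zeta m else 1) * sgnb (y \<and> x) / of_real (sqrt 2)"

definition Sgate :: "nat \<Rightarrow> gate1" where
  "Sgate m y x = (if y = x then (if x then zeta m else 1) else 0)"

text \<open>n-qubit register states: amplitudes indexed by bit strings of length n.\<close>
type_synonym reg = "bool list \<Rightarrow> complex"

definition tensor_pow :: "nat \<Rightarrow> gate1 \<Rightarrow> reg \<Rightarrow> reg" where
  "tensor_pow n M \<psi> = (\<lambda>y. \<Sum>x\<in>bitstrings n. (\<Prod>i<n. M (y ! i) (x ! i)) * \<psi> x)"

definition phase_oracle :: "(bool list \<Rightarrow> bool) \<Rightarrow> reg \<Rightarrow> reg" where
  "phase_oracle f \<psi> = (\<lambda>x. sgnb (f x) * \<psi> x)"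

definition ket0 :: "nat \<Rightarrow> reg" where
  "ket0 n = (\<lambda>x. if x = replicate n False then 1 else 0)"

text \<open>Joint states of driving qubit (bool) and register.\<close>
type_synonym jstate = "bool \<Rightarrow> reg"

definition apply_reg :: "(reg \<Rightarrow> reg) \<Rightarrow> jstate \<Rightarrow> jstate" where
  "apply_reg U \<Psi> = (\<lambda>c. U (\<Psi> c))"

definition controlled :: "bool \<Rightarrow> (reg \<Rightarrow> reg) \<Rightarrow> jstate \<Rightarrow> jstate" where
  "controlled b U \<Psi> = (\<lambda>c. if c = b then U (\<Psi> c) else \<Psi> c)"

definition apply_drive :: "gate1 \<Rightarrow> jstate \<Rightarrow> jstate" where
  "apply_drive M \<Psi> = (\<lambda>c x. M c False * \<Psi> False x + M c True * \<Psi> True x)"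

text \<open>Initial state |+> (x) |0^n>\<close>
definition init_state :: "nat \<Rightarrow> jstate" where
  "init_state n = (\<lambda>c. (\<lambda>x. ket0 n x / of_real (sqrt 2)))"

text \<open>Final state of algorithm A^{(m)2,3}_n(f1,f2,f3) before measurement.\<close>
definition alg_final :: "nat \<Rightarrow> nat \<Rightarrow> (bool list \<Rightarrow> bool) \<Rightarrow> (bool list \<Rightarrow> bool)
    \<Rightarrow> (bool list \<Rightarrow> bool) \<Rightarrow> jstate" where
  "alg_final n m f1 f2 f3 =
     (let s1 = apply_reg (tensor_pow n hadamard) (init_state n);
          s2 = controlled False
                 (tensor_pow n hadamard \<circ> phase_oracle f1 \<circ> tensor_pow n (Omega m) \<circ> phase_oracle f2) s1;
          s3 = controlled True (phase_oracle f3 \<circ> tensor_pow n (Sgate m)) s2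
      in apply_drive hadamard s3)"

definition prob_drive_one :: "nat \<Rightarrow> nat \<Rightarrow> (bool list \<Rightarrow> bool) \<Rightarrow> (bool list \<Rightarrow> bool)
    \<Rightarrow> (bool list \<Rightarrow> bool) \<Rightarrow> real" where
  "prob_drive_one n m f1 f2 f3 = (\<Sum>x\<in>bitstrings n. (cmod (alg_final n m f1 f2 f3 True x))\<^sup>2)"

end

theory Submission
  imports Defs
begin

text \<open>Since Omega_m = H S_m, the |0>-branch sends the uniform register state to
  H^n U_g H^n phi, where phi x = (-1)^(f x) zeta_m^(wt x) up to the common factor
  2^(-(n+1)/2), and H^n phi is the m-Hadamard transform H_f of f. The |1>-branch produces phi
  itself, which is H^n H_f because H^n is an involution. The final Hadamard gate on the driving
  qubit therefore leaves the amplitude H^n ((U_g - I) H_f) on |1>, and since H^n is unitary the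
  probability is the squared norm of (U_g - I) H_f, which is 4 |H_f|^2 on S and 0 elsewhere.\<close>

lemma bitstrings_0: "bitstrings 0 = {[]}"
  by (auto simp: bitstrings_def)

lemma bitstrings_Suc: "bitstrings (Suc n) = (\<lambda>(b, xs). b # xs) ` (UNIV \<times> bitstrings n)"
  by (auto simp: bitstrings_def image_iff length_Suc_conv)

lemma finite_bitstrings [simp]: "finite (bitstrings n)"
  by (induction n) (auto simp: bitstrings_0 bitstrings_Suc)

lemma sum_bitstrings_prod:
  fixes F :: "nat \<Rightarrow> bool \<Rightarrow> 'a::comm_semiring_1"
  shows "(\<Sum>x\<in>bitstrings n. \<Prod>i<n. F i (x ! i)) = (\<Prod>i<n. F i False + F i True)"
proof (induction n arbitrary: F)
  case 0
  then show ?case by (simp add: bitstrings_0)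
next
  case (Suc n)
  have "(\<Sum>x\<in>bitstrings (Suc n). \<Prod>i<Suc n. F i (x ! i))
      = (\<Sum>(b, xs)\<in>UNIV \<times> bitstrings n. F 0 b * (\<Prod>i<n. F (Suc i) (xs ! i)))"
    by (subst bitstrings_Suc, subst sum.reindex)
       (auto simp: inj_on_def case_prod_beta prod.lessThan_Suc_shift simp del: prod.lessThan_Suc)
  also have "\<dots> = (\<Sum>b\<in>UNIV. F 0 b) * (\<Prod>i<n. F (Suc i) False + F (Suc i) True)"
    by (simp add: sum.cartesian_product[symmetric] sum_distrib_left[symmetric] sum_distrib_right
        Suc.IH[of "\<lambda>i. F (Suc i)"])
  also have "\<dots> = (\<Prod>i<Suc n. F i False + F i True)"
    by (simp add: UNIV_bool prod.lessThan_Suc_shift del: prod.lessThan_Suc)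
  finally show ?case .
qed

lemma prod_if_nth_eq:
  fixes c :: "nat \<Rightarrow> 'a::comm_semiring_1"
  assumes "length x = n" "length y = n"
  shows "(\<Prod>i<n. if x ! i = y ! i then c i else 0) = (if x = y then \<Prod>i<n. c i else 0)"
proof (cases "x = y")
  case False
  with assms obtain j where "j < n" "x ! j \<noteq> y ! j"
    by (metis nth_equalityI)
  then have "(\<Prod>i<n. if x ! i = y ! i then c i else 0) = 0"
    by (auto intro!: prod_zero)
  with False show ?thesis by simp
qed simp

definition gate_mult :: "gate1 \<Rightarrow> gate1 \<Rightarrow> gate1" where
  "gate_mult A B = (\<lambda>y x. A y False * B False x + A y True * B True x)"

definition gate_adj :: "gate1 \<Rightarrow> gate1" where
  "gate_adj M = (\<lambda>y x. cnj (M x y))"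

definition diag_gate :: "(bool \<Rightarrow> complex) \<Rightarrow> gate1" where
  "diag_gate d = (\<lambda>y x. if y = x then d x else 0)"

definition unitary_gate :: "gate1 \<Rightarrow> bool" where
  "unitary_gate M \<longleftrightarrow> gate_mult (gate_adj M) M = diag_gate (\<lambda>_. 1)"

lemma tensor_pow_cong:
  "(\<And>x. x \<in> bitstrings n \<Longrightarrow> \<psi> x = \<phi> x) \<Longrightarrow> tensor_pow n M \<psi> = tensor_pow n M \<phi>"
  by (simp add: tensor_pow_def)

lemma tensor_pow_scale: "tensor_pow n M (\<lambda>x. c * \<psi> x) y = c * tensor_pow n M \<psi> y"
  by (simp add: tensor_pow_def sum_distrib_left mult_ac)

lemma tensor_pow_diff:
  "tensor_pow n M (\<lambda>x. \<psi> x - \<phi> x) y = tensor_pow n M \<psi> y - tensor_pow n M \<phi> y"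
  by (simp add: tensor_pow_def sum_subtractf right_diff_distrib)

lemma tensor_pow_ket0: "tensor_pow n M (ket0 n) y = (\<Prod>i<n. M (y ! i) False)"
proof -
  have "replicate n False \<in> bitstrings n"
    by (simp add: bitstrings_def)
  then show ?thesis
    by (simp add: tensor_pow_def ket0_def if_distrib cong: if_cong)
qed

lemma tensor_pow_diag_gate:
  assumes "y \<in> bitstrings n"
  shows "tensor_pow n (diag_gate d) \<psi> y = (\<Prod>i<n. d (y ! i)) * \<psi> y"
proof -
  have "tensor_pow n (diag_gate d) \<psi> y
      = (\<Sum>x\<in>bitstrings n. if y = x then (\<Prod>i<n. d (y ! i)) * \<psi> x else 0)"
    unfolding tensor_pow_def
  proof (intro sum.cong refl)
    fix x assume "x \<in> bitstrings n"
    then show "(\<Prod>i<n. diag_gate d (y ! i) (x ! i)) * \<psi> x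
        = (if y = x then (\<Prod>i<n. d (y ! i)) * \<psi> x else 0)"
      using prod_if_nth_eq[of y n x "\<lambda>i. d (x ! i)"] assms
      by (simp add: diag_gate_def bitstrings_def)
  qed
  then show ?thesis
    using assms by simp
qed

lemma tensor_pow_gate_mult:
  "tensor_pow n A (tensor_pow n B \<psi>) = tensor_pow n (gate_mult A B) \<psi>"
proof
  fix y
  have "tensor_pow n A (tensor_pow n B \<psi>) y
      = (\<Sum>w\<in>bitstrings n. (\<Sum>x\<in>bitstrings n. \<Prod>i<n. A (y ! i) (x ! i) * B (x ! i) (w ! i)) * \<psi> w)"
    unfolding tensor_pow_def sum_distrib_left
    by (subst sum.swap) (simp add: sum_distrib_left sum_distrib_right prod.distrib mult_ac)
  also have "\<dots> = tensor_pow n (gate_mult A B) \<psi> y"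
    unfolding tensor_pow_def gate_mult_def
    using sum_bitstrings_prod[of "\<lambda>i b. A (y ! i) b * B b (_ ! i)"] by simp
  finally show "tensor_pow n A (tensor_pow n B \<psi>) y = tensor_pow n (gate_mult A B) \<psi> y" .
qed

lemma tensor_pow_adjoint:
  "(\<Sum>y\<in>bitstrings n. cnj (\<phi> y) * tensor_pow n M \<psi> y)
     = (\<Sum>x\<in>bitstrings n. cnj (tensor_pow n (gate_adj M) \<phi> x) * \<psi> x)"
  unfolding tensor_pow_def gate_adj_def sum_distrib_left cnj_sum sum_distrib_right
  by (subst sum.swap) (simp add: cnj_prod mult_ac)

lemma of_real_cmod_sq: "complex_of_real ((cmod z)\<^sup>2) = cnj z * z"
  by (metis complex_norm_square mult.commute)

lemma sum_cmod_sq_tensor_pow_unitary: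
  assumes "unitary_gate M"
  shows "(\<Sum>y\<in>bitstrings n. (cmod (tensor_pow n M \<psi> y))\<^sup>2) = (\<Sum>x\<in>bitstrings n. (cmod (\<psi> x))\<^sup>2)"
proof -
  have "complex_of_real (\<Sum>y\<in>bitstrings n. (cmod (tensor_pow n M \<psi> y))\<^sup>2)
      = (\<Sum>y\<in>bitstrings n. cnj (tensor_pow n M \<psi> y) * tensor_pow n M \<psi> y)"
    by (simp only: of_real_sum of_real_cmod_sq)
  also have "\<dots> = (\<Sum>x\<in>bitstrings n. cnj (tensor_pow n (diag_gate (\<lambda>_. 1)) \<psi> x) * \<psi> x)"
    using assms by (simp add: tensor_pow_adjoint tensor_pow_gate_mult unitary_gate_def)
  also have "\<dots> = complex_of_real (\<Sum>x\<in>bitstrings n. (cmod (\<psi> x))\<^sup>2)"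
    by (simp only: of_real_sum of_real_cmod_sq) (simp add: tensor_pow_diag_gate)
  finally show ?thesis
    using of_real_eq_iff by blast
qed

lemma sqrt2_sq: "complex_of_real (sqrt 2) * complex_of_real (sqrt 2) = 2"
  by (simp flip: of_real_mult)

lemma gate_adj_hadamard: "gate_adj hadamard = hadamard"
  by (intro ext) (simp add: gate_adj_def hadamard_def sgnb_def conj_commute)

lemma gate_mult_hadamard_hadamard: "gate_mult hadamard hadamard = diag_gate (\<lambda>_. 1)"
  by (intro ext) (simp add: gate_mult_def diag_gate_def hadamard_def sgnb_def sqrt2_sq divide_simps)

lemma unitary_hadamard: "unitary_gate hadamard"
  by (simp add: unitary_gate_def gate_adj_hadamard gate_mult_hadamard_hadamard)

lemma tensor_pow_hadamard_involutive:
  "x \<in> bitstrings n \<Longrightarrow> tensor_pow n hadamard (tensor_pow n hadamard \<psi>) x = \<psi> x"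
  by (simp add: tensor_pow_gate_mult gate_mult_hadamard_hadamard tensor_pow_diag_gate)

lemma Omega_eq_gate_mult: "Omega m = gate_mult hadamard (Sgate m)"
  by (intro ext) (simp add: Omega_def gate_mult_def hadamard_def Sgate_def)

lemma Sgate_eq_diag_gate: "Sgate m = diag_gate (\<lambda>b. if b then zeta m else 1)"
  by (intro ext) (simp add: Sgate_def diag_gate_def)

lemma power_wt: "c ^ wt x = (\<Prod>i<length x. if x ! i then c else 1)"
proof (induction x)
  case (Cons b x)
  then show ?case
    by (simp add: wt_def prod.lessThan_Suc_shift del: prod.lessThan_Suc)
qed (simp add: wt_def)

lemma tensor_pow_Sgate:
  "y \<in> bitstrings n \<Longrightarrow> tensor_pow n (Sgate m) \<psi> y = zeta m ^ wt y * \<psi> y"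
  by (simp add: Sgate_eq_diag_gate tensor_pow_diag_gate power_wt bitstrings_def)

lemma sgnb_dotp:
  assumes "length x = length w"
  shows "sgnb (dotp x w) = (\<Prod>i<length x. sgnb (x ! i \<and> w ! i))"
proof -
  have "{i. i < length x \<and> i < length w \<and> x ! i \<and> w ! i} = {..<length x} \<inter> {i. x ! i \<and> w ! i}"
    using assms by auto
  moreover have "(\<Prod>i<length x. sgnb (x ! i \<and> w ! i))
      = (-1) ^ card ({..<length x} \<inter> {i. x ! i \<and> w ! i})"
    by (simp add: sgnb_def prod.If_cases)
  ultimately show ?thesis
    by (simp add: dotp_def sgnb_def)
qed

lemma prod_hadamard:
  assumes "length x = n" "length w = n"
  shows "(\<Prod>i<n. hadamard (w ! i) (x ! i)) = sgnb (dotp x w) / complex_of_real (sqrt (2 ^ n))"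
  using assms
  by (simp add: hadamard_def prod_dividef sgnb_dotp conj_commute real_sqrt_power)

lemma mHadamard_eq_tensor_pow_hadamard:
  assumes "w \<in> bitstrings n"
  shows "mHadamard n m f w = tensor_pow n hadamard (\<lambda>x. sgnb (f x) * zeta m ^ wt x) w"
proof -
  have "(\<Prod>i<n. hadamard (w ! i) (x ! i)) * (sgnb (f x) * zeta m ^ wt x)
      = sgnb (f x \<noteq> dotp x w) * zeta m ^ wt x / complex_of_real (sqrt (2 ^ n))"
    if "x \<in> bitstrings n" for x
    using that assms by (simp add: prod_hadamard bitstrings_def sgnb_def)
  then show ?thesis
    by (simp add: mHadamard_def tensor_pow_def sum_divide_distrib cong: sum.cong)
qed

lemma tensor_pow_Omega:
  "tensor_pow n (Omega m) \<psi> = tensor_pow n hadamard (\<lambda>x. zeta m ^ wt x * \<psi> x)"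
  unfolding Omega_eq_gate_mult tensor_pow_gate_mult[symmetric]
  by (intro tensor_pow_cong) (simp add: tensor_pow_Sgate)

lemma hadamard_first_stage:
  "apply_reg (tensor_pow n hadamard) (init_state n)
     = (\<lambda>c y. 1 / complex_of_real (sqrt 2) ^ Suc n)"
proof (intro ext)
  fix c y
  have "init_state n c = (\<lambda>x. 1 / complex_of_real (sqrt 2) * ket0 n x)"
    by (simp add: init_state_def)
  then have "apply_reg (tensor_pow n hadamard) (init_state n) c y
      = 1 / complex_of_real (sqrt 2) * tensor_pow n hadamard (ket0 n) y"
    by (simp only: apply_reg_def tensor_pow_scale)
  also have "\<dots> = 1 / complex_of_real (sqrt 2) ^ Suc n"
    by (simp add: tensor_pow_ket0 hadamard_def sgnb_def power_one_over)
  finally show "apply_reg (tensor_pow n hadamard) (init_state n) c y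
      = 1 / complex_of_real (sqrt 2) ^ Suc n" .
qed

lemma alg_final_drive_one:
  assumes z: "z \<in> bitstrings n"
  shows "alg_final n m g f f True z
     = tensor_pow n hadamard (\<lambda>y. (sgnb (g y) - 1) * mHadamard n m f y) z
       / complex_of_real (sqrt 2) ^ (n + 2)"
proof -
  let ?H = "tensor_pow n hadamard" and ?s = "complex_of_real (sqrt 2)"
  define \<kappa> where "\<kappa> = 1 / ?s ^ Suc n"
  define \<phi> where "\<phi> = (\<lambda>x. sgnb (f x) * zeta m ^ wt x)"
  have H\<phi>: "?H (\<lambda>x. \<kappa> * \<phi> x) y = \<kappa> * mHadamard n m f y" if "y \<in> bitstrings n" for y
    using that by (simp add: tensor_pow_scale mHadamard_eq_tensor_pow_hadamard \<phi>_def)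
  have branch0: "?H (phase_oracle g (tensor_pow n (Omega m) (phase_oracle f (\<lambda>_. \<kappa>)))) z
      = ?H (\<lambda>y. sgnb (g y) * (\<kappa> * mHadamard n m f y)) z"
  proof -
    have "tensor_pow n (Omega m) (phase_oracle f (\<lambda>_. \<kappa>)) = ?H (\<lambda>x. \<kappa> * \<phi> x)"
      by (simp add: tensor_pow_Omega phase_oracle_def \<phi>_def mult_ac)
    then show ?thesis
      unfolding phase_oracle_def by (intro fun_cong[OF tensor_pow_cong]) (simp add: H\<phi>)
  qed
  have branch1: "phase_oracle f (tensor_pow n (Sgate m) (\<lambda>_. \<kappa>)) z
      = ?H (\<lambda>y. \<kappa> * mHadamard n m f y) z"
  proof -
    have "phase_oracle f (tensor_pow n (Sgate m) (\<lambda>_. \<kappa>)) z = ?H (?H (\<lambda>x. \<kappa> * \<phi> x)) z"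
      using z by (simp add: phase_oracle_def tensor_pow_Sgate tensor_pow_hadamard_involutive \<phi>_def)
    also have "\<dots> = ?H (\<lambda>y. \<kappa> * mHadamard n m f y) z"
      by (intro fun_cong[OF tensor_pow_cong]) (simp add: H\<phi>)
    finally show ?thesis .
  qed
  have "alg_final n m g f f True z = (?H (\<lambda>y. sgnb (g y) * (\<kappa> * mHadamard n m f y)) z
      - ?H (\<lambda>y. \<kappa> * mHadamard n m f y) z) / ?s"
    using branch0 branch1
    by (simp add: alg_final_def hadamard_first_stage apply_drive_def controlled_def
        hadamard_def sgnb_def \<kappa>_def diff_divide_distrib)
  also have "\<dots> = ?H (\<lambda>y. \<kappa> * ((sgnb (g y) - 1) * mHadamard n m f y)) z / ?s"
    by (simp only: tensor_pow_diff[symmetric]) (simp add: algebra_simps)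
  also have "\<dots> = \<kappa> / ?s * ?H (\<lambda>y. (sgnb (g y) - 1) * mHadamard n m f y) z"
    by (simp add: tensor_pow_scale)
  finally show ?thesis
    by (simp add: \<kappa>_def)
qed

lemma cmod_sq_divide_sqrt2_power:
  "(cmod (z / complex_of_real (sqrt 2) ^ k))\<^sup>2 = (cmod z)\<^sup>2 / 2 ^ k"
proof -
  have "(sqrt 2 ^ k)\<^sup>2 = (sqrt 2 ^ 2) ^ k"
    by (metis power_mult mult.commute)
  then show ?thesis
    by (simp add: norm_divide norm_power power_divide)
qed

lemma cmod_sq_sgnb_minus_one: "(cmod ((sgnb b - 1) * z))\<^sup>2 = (if b then 4 * (cmod z)\<^sup>2 else 0)"
  by (simp add: sgnb_def norm_mult power_mult_distrib)

theorem proposition1: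
  fixes n m :: nat and f g :: "bool list \<Rightarrow> bool" and S :: "bool list set"
  assumes "S \<subseteq> bitstrings n"
    and "\<And>x. x \<in> bitstrings n \<Longrightarrow> (g x \<longleftrightarrow> x \<in> S)"
  shows "prob_drive_one n m g f f = (1 / 2 ^ n) * (\<Sum>x\<in>S. (cmod (mHadamard n m f x))\<^sup>2)"
proof -
  let ?D = "\<lambda>y. (sgnb (g y) - 1) * mHadamard n m f y"
  have "prob_drive_one n m g f f
      = (\<Sum>z\<in>bitstrings n. (cmod (tensor_pow n hadamard ?D z))\<^sup>2) / 2 ^ (n + 2)"
    unfolding prob_drive_one_def sum_divide_distrib
    by (intro sum.cong refl) (simp only: alg_final_drive_one cmod_sq_divide_sqrt2_power)
  also have "\<dots> = (\<Sum>y\<in>bitstrings n. (cmod (?D y))\<^sup>2) / 2 ^ (n + 2)"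
    by (simp add: sum_cmod_sq_tensor_pow_unitary unitary_hadamard)
  also have "(\<Sum>y\<in>bitstrings n. (cmod (?D y))\<^sup>2) = 4 * (\<Sum>y\<in>S. (cmod (mHadamard n m f y))\<^sup>2)"
    using assms
    by (simp add: cmod_sq_sgnb_minus_one sum.If_cases Int_absorb1 sum_distrib_left cong: sum.cong)
  finally show ?thesis
    by (simp add: power_add)
qed

end
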